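(* Let $\mathcal{M}$ be a topological space, $T:\mathcal{M}\to\mathcal{M}$ a map, and $\mu$ a positive measure on $\mathcal{M}$ such that $\phi\mapsto\phi\circ T$ is a well-defined operator $\mathcal{K}:L_2(\mu)\to L_2(\mu)$, and assume $\mathcal{K}$ is bounded. Let $(\psi_i)_{i=1}^\infty$ be an orthonormal basis of $L_2(\mu)$, $\mathcal{F}_N=\mathrm{span}\{\psi_1,\dots,\psi_N\}$, $P_N^\mu$ the $L_2(\mu)$-orthogonal projection onto $\mathcal{F}_N$, and $\mathcal{K}_N=P_N^\mu\mathcal{K}|_{\mathcal{F}_N}:\mathcal{F}_N\to\mathcal{F}_N$. Suppose that for each $N$, $\lambda_N\in\mathbb{C}$ is an eigenvalue of $\mathcal{K}_N$ with associated eigenfunction $\phi_N\in\mathcal{F}_N$, $\|\phi_N\|_{L_2(\mu)}=1$. Then there exists a subsequence $(\lambda_{N_i},\phi_{N_i})$ such that $\lim_{i\to\infty}\lambda_{N_i}=\lambda$ and $\phi_{N_i}$ converges weakly in $L_2(\mu)$ to $\phi$, where $\lambda\in\mathbb{C}$ and $\phi\in L_2(\mu)$ satisfy $\mathcal{K}\phi=\lambda\phi$. In particular, if $\|\phi\|\neq0$, then $\lambda$ is an eigenvalue of $\mathcal{K}$ with eigenfunction $\phi$.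
   Context: $\mathcal{K}\phi=\phi\circ T$ is the Koopman operator. $P_N^\mu\phi=\operatorname{arg\,min}_{f\in\mathcal{F}_N}\|f-\phi\|_{L_2(\mu)}$. Weak convergence $f_i\to f$ means $\int f_i\overline{g}\,d\mu\to\int f\overline{g}\,d\mu$ for all $g\in L_2(\mu)$. *)

theory Defs
  imports "HOL-Analysis.Analysis"
begin

text \<open>Concrete model of the complex Hilbert space L_2(mu): square-integrable
  complex-valued measurable functions, elements identified up to mu-a.e. equality
  (all statements below are invariant under a.e. modification).\<close>

definition L2 :: "'a measure \<Rightarrow> ('a \<Rightarrow> complex) set" where
  "L2 M = {f. f \<in> borel_measurable M \<and> integrable M (\<lambda>x. (norm (f x))\<^sup>2)}"

definition l2inner :: "'a measure \<Rightarrow> ('a \<Rightarrow> complex) \<Rightarrow> ('a \<Rightarrow> complex) \<Rightarrow> complex" where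
  "l2inner M f g = (\<integral>x. f x * cnj (g x) \<partial>M)"

definition l2norm :: "'a measure \<Rightarrow> ('a \<Rightarrow> complex) \<Rightarrow> real" where
  "l2norm M f = sqrt (\<integral>x. (norm (f x))\<^sup>2 \<partial>M)"

definition koopman_bounded :: "'a measure \<Rightarrow> ('a \<Rightarrow> 'a) \<Rightarrow> bool" where
  "koopman_bounded M T \<longleftrightarrow>
     (\<forall>f\<in>L2 M. f \<circ> T \<in> L2 M) \<and>
     (\<forall>f\<in>L2 M. \<forall>g\<in>L2 M. (AE x in M. f x = g x) \<longrightarrow> (AE x in M. f (T x) = g (T x))) \<and>
     (\<exists>C. \<forall>f\<in>L2 M. l2norm M (f \<circ> T) \<le> C * l2norm M f)"

definition orthonormal_basis :: "'a measure \<Rightarrow> (nat \<Rightarrow> 'a \<Rightarrow> complex) \<Rightarrow> bool" where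
  "orthonormal_basis M \<psi> \<longleftrightarrow>
     (\<forall>i. \<psi> i \<in> L2 M) \<and>
     (\<forall>i j. l2inner M (\<psi> i) (\<psi> j) = (if i = j then 1 else 0)) \<and>
     (\<forall>f\<in>L2 M. (\<forall>i. l2inner M f (\<psi> i) = 0) \<longrightarrow> (AE x in M. f x = 0))"

text \<open>F_N = span of the first N basis functions (psi 0, ..., psi (N-1)).\<close>
definition in_FN :: "'a measure \<Rightarrow> (nat \<Rightarrow> 'a \<Rightarrow> complex) \<Rightarrow> nat \<Rightarrow> ('a \<Rightarrow> complex) \<Rightarrow> bool" where
  "in_FN M \<psi> N f \<longleftrightarrow> f \<in> L2 M \<and>
     (\<exists>c :: nat \<Rightarrow> complex. AE x in M. f x = (\<Sum>i<N. c i * \<psi> i x))"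

definition projN :: "'a measure \<Rightarrow> (nat \<Rightarrow> 'a \<Rightarrow> complex) \<Rightarrow> nat \<Rightarrow> ('a \<Rightarrow> complex) \<Rightarrow> ('a \<Rightarrow> complex)" where
  "projN M \<psi> N f = (\<lambda>x. \<Sum>i<N. l2inner M f (\<psi> i) * \<psi> i x)"

definition eigenpair_KN :: "'a measure \<Rightarrow> ('a \<Rightarrow> 'a) \<Rightarrow> (nat \<Rightarrow> 'a \<Rightarrow> complex) \<Rightarrow> nat
    \<Rightarrow> complex \<Rightarrow> ('a \<Rightarrow> complex) \<Rightarrow> bool" where
  "eigenpair_KN M T \<psi> N lam phi \<longleftrightarrow> in_FN M \<psi> N phi \<and>
     (AE x in M. projN M \<psi> N (phi \<circ> T) x = lam * phi x)"

definition weak_conv :: "'a measure \<Rightarrow> (nat \<Rightarrow> 'a \<Rightarrow> complex) \<Rightarrow> ('a \<Rightarrow> complex) \<Rightarrow> bool" where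
  "weak_conv M fs f \<longleftrightarrow> (\<forall>g\<in>L2 M. (\<lambda>i. l2inner M (fs i) g) \<longlonglongrightarrow> l2inner M f g)"

end

theory Submission
  imports Defs "HOL-Library.Diagonal_Subsequence"
begin

text \<open>The eigenpairs of the Galerkin matrices satisfy \<open>|\<lambda>\<^sub>N|\<^sup>2 \<le> C\<close>
  and \<open>\<parallel>\<phi>\<^sub>N\<parallel> = 1\<close>, because \<open>\<lambda>\<^sub>N \<phi>\<^sub>N = P\<^sub>N K \<phi>\<^sub>N\<close> and
  \<open>\<parallel>K\<parallel>\<^sup>2 \<le> C\<close>. Bolzano--Weierstrass and a diagonal argument on the Fourier coefficients
  give a subsequence along which \<open>\<lambda>\<^sub>N \<rightarrow> \<lambda>\<close> and every coefficient
  \<open>\<langle>\<phi>\<^sub>N, \<psi>\<^sub>j\<rangle>\<close> converges; by Bessel the limits are square summable, so by Riesz--Fischer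
  they are the coefficients of some \<open>\<phi> \<in> L\<^sub>2\<close>, and boundedness plus density of the span of
  the \<open>\<psi>\<^sub>j\<close> upgrades this to weak convergence \<open>\<phi>\<^sub>N \<rightharpoonup> \<phi>\<close>.
  For \<open>j < N\<close> the Galerkin equation says \<open>\<langle>K\<phi>\<^sub>N, \<psi>\<^sub>j\<rangle> = \<lambda>\<^sub>N \<langle>\<phi>\<^sub>N, \<psi>\<^sub>j\<rangle>\<close>,
  and the left side equals \<open>\<langle>\<phi>\<^sub>N, K\<^sup>*\<psi>\<^sub>j\<rangle>\<close>, a weakly continuous functional.
  In the limit \<open>\<langle>K\<phi>, \<psi>\<^sub>j\<rangle> = \<lambda> \<langle>\<phi>, \<psi>\<^sub>j\<rangle>\<close> for every \<open>j\<close>, so \<open>K\<phi> = \<lambda>\<phi>\<close>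
  by completeness of the basis.\<close>

section \<open>Square-integrable functions\<close>

definition l2norm2 :: "'a measure \<Rightarrow> ('a \<Rightarrow> complex) \<Rightarrow> real" where
  "l2norm2 M f = (\<integral>x. (cmod (f x))\<^sup>2 \<partial>M)"

lemma l2norm_eq_sqrt_l2norm2: "l2norm M f = sqrt (l2norm2 M f)"
  unfolding l2norm_def l2norm2_def ..

lemma l2norm2_nonneg: "0 \<le> l2norm2 M f"
  unfolding l2norm2_def by simp

lemma l2norm_nonneg: "0 \<le> l2norm M f"
  unfolding l2norm_def by simp

lemma l2norm2_mult: "l2norm2 M (\<lambda>x. c * f x) = (cmod c)\<^sup>2 * l2norm2 M f"
  unfolding l2norm2_def by (simp add: norm_mult power_mult_distrib)

lemma borel_measurable_cnj [measurable]:
  "f \<in> borel_measurable M \<Longrightarrow> (\<lambda>x. cnj (f x)) \<in> borel_measurable M"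
  by (rule borel_measurable_continuous_on[where f=cnj]) (intro continuous_intros)

lemma L2_measurable: "f \<in> L2 M \<Longrightarrow> f \<in> borel_measurable M"
  and L2_integrable_norm2: "f \<in> L2 M \<Longrightarrow> integrable M (\<lambda>x. (cmod (f x))\<^sup>2)"
  by (auto simp: L2_def)

lemma L2_zero [simp]: "(\<lambda>x. 0) \<in> L2 M"
  by (auto simp: L2_def)

lemma norm_add_power2_le: "(norm (a + b))\<^sup>2 \<le> 2 * (norm a)\<^sup>2 + 2 * (norm b)\<^sup>2"
  for a b :: "'a::real_normed_vector"
proof -
  have "(norm (a + b))\<^sup>2 \<le> (norm a + norm b)\<^sup>2"
    by (simp add: norm_triangle_ineq power_mono)
  also have "\<dots> \<le> 2 * (norm a)\<^sup>2 + 2 * (norm b)\<^sup>2"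
    using sum_squares_bound[of "norm a" "norm b"] by (simp add: power2_sum)
  finally show ?thesis .
qed

lemma L2_add:
  assumes "f \<in> L2 M" "g \<in> L2 M"
  shows "(\<lambda>x. f x + g x) \<in> L2 M"
proof -
  have [measurable]: "f \<in> borel_measurable M" "g \<in> borel_measurable M"
    using assms by (auto dest: L2_measurable)
  have "integrable M (\<lambda>x. (cmod (f x + g x))\<^sup>2)"
  proof (rule Bochner_Integration.integrable_bound)
    show "integrable M (\<lambda>x. 2 * (cmod (f x))\<^sup>2 + 2 * (cmod (g x))\<^sup>2)"
      using assms by (intro Bochner_Integration.integrable_add Bochner_Integration.integrable_mult_right L2_integrable_norm2)
    show "AE x in M. norm ((cmod (f x + g x))\<^sup>2) \<le> norm (2 * (cmod (f x))\<^sup>2 + 2 * (cmod (g x))\<^sup>2)"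
      by (simp add: norm_add_power2_le)
  qed measurable
  then show ?thesis
    by (simp add: L2_def)
qed

lemma L2_mult:
  assumes "f \<in> L2 M"
  shows "(\<lambda>x. c * f x) \<in> L2 M"
  using assms by (auto simp: L2_def norm_mult power_mult_distrib)

lemma L2_diff:
  assumes "f \<in> L2 M" "g \<in> L2 M"
  shows "(\<lambda>x. f x - g x) \<in> L2 M"
  using L2_add[OF assms(1) L2_mult[OF assms(2), of "-1"]] by simp

lemma L2_sum:
  assumes "\<And>i. i \<in> A \<Longrightarrow> f i \<in> L2 M"
  shows "(\<lambda>x. \<Sum>i\<in>A. f i x) \<in> L2 M"
  using assms by (induction A rule: infinite_finite_induct) (auto intro: L2_add)

lemma l2inner_integrable:
  assumes "f \<in> L2 M" "g \<in> L2 M"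
  shows "integrable M (\<lambda>x. f x * cnj (g x))"
proof (rule Bochner_Integration.integrable_bound)
  have [measurable]: "f \<in> borel_measurable M" "g \<in> borel_measurable M"
    using assms by (auto dest: L2_measurable)
  show "integrable M (\<lambda>x. (cmod (f x))\<^sup>2 + (cmod (g x))\<^sup>2)"
    using assms by (auto dest: L2_integrable_norm2)
  show "(\<lambda>x. f x * cnj (g x)) \<in> borel_measurable M"
    by measurable
  show "AE x in M. norm (f x * cnj (g x)) \<le> norm ((cmod (f x))\<^sup>2 + (cmod (g x))\<^sup>2)"
  proof
    fix x
    have "cmod (f x) * cmod (g x) \<le> 2 * cmod (f x) * cmod (g x)"
      by simp
    also have "\<dots> \<le> (cmod (f x))\<^sup>2 + (cmod (g x))\<^sup>2"
      by (rule sum_squares_bound)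
    finally show "norm (f x * cnj (g x)) \<le> norm ((cmod (f x))\<^sup>2 + (cmod (g x))\<^sup>2)"
      by (simp add: norm_mult)
  qed
qed

lemma l2inner_add_left:
  assumes "f \<in> L2 M" "g \<in> L2 M" "h \<in> L2 M"
  shows "l2inner M (\<lambda>x. f x + g x) h = l2inner M f h + l2inner M g h"
  unfolding l2inner_def
  using l2inner_integrable[OF assms(1,3)] l2inner_integrable[OF assms(2,3)]
  by (simp add: distrib_right)

lemma l2inner_mult_left: "l2inner M (\<lambda>x. c * f x) h = c * l2inner M f h"
  unfolding l2inner_def by (simp add: mult.assoc)

lemma l2inner_mult_right: "l2inner M f (\<lambda>x. c * h x) = cnj c * l2inner M f h"
  unfolding l2inner_def by (simp add: ac_simps)

lemma l2inner_commute: "l2inner M g f = cnj (l2inner M f g)"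
proof -
  have "(\<lambda>x. g x * cnj (f x)) = (\<lambda>x. cnj (f x * cnj (g x)))"
    by (simp add: fun_eq_iff mult.commute)
  then show ?thesis
    unfolding l2inner_def by (simp only: Bochner_Integration.integral_cnj)
qed

lemma l2inner_diff_left:
  assumes "f \<in> L2 M" "g \<in> L2 M" "h \<in> L2 M"
  shows "l2inner M (\<lambda>x. f x - g x) h = l2inner M f h - l2inner M g h"
  using l2inner_add_left[OF assms(1) L2_mult[OF assms(2)] assms(3), of "-1"]
    l2inner_mult_left[of M "-1" g h]
  by simp

lemma l2inner_diff_right:
  assumes "f \<in> L2 M" "g \<in> L2 M" "h \<in> L2 M"
  shows "l2inner M h (\<lambda>x. f x - g x) = l2inner M h f - l2inner M h g"
  by (metis l2inner_diff_left[OF assms] l2inner_commute complex_cnj_diff)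

lemma l2inner_sum_left:
  assumes "\<And>i. i \<in> A \<Longrightarrow> f i \<in> L2 M" "h \<in> L2 M"
  shows "l2inner M (\<lambda>x. \<Sum>i\<in>A. f i x) h = (\<Sum>i\<in>A. l2inner M (f i) h)"
  using assms
proof (induction A rule: infinite_finite_induct)
  case (insert a A)
  then have "l2inner M (\<lambda>x. f a x + (\<Sum>i\<in>A. f i x)) h
      = l2inner M (f a) h + l2inner M (\<lambda>x. \<Sum>i\<in>A. f i x) h"
    by (intro l2inner_add_left L2_sum) auto
  with insert show ?case
    by simp
qed (simp_all add: l2inner_def)

lemma l2inner_sum_right:
  assumes "\<And>i. i \<in> A \<Longrightarrow> f i \<in> L2 M" "h \<in> L2 M"
  shows "l2inner M h (\<lambda>x. \<Sum>i\<in>A. f i x) = (\<Sum>i\<in>A. l2inner M h (f i))"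
proof -
  have "l2inner M h (\<lambda>x. \<Sum>i\<in>A. f i x) = cnj (\<Sum>i\<in>A. l2inner M (f i) h)"
    by (simp only: l2inner_commute[of M h] l2inner_sum_left[OF assms])
  then show ?thesis
    by (simp add: l2inner_commute[of M _ h])
qed

lemma l2inner_self: "l2inner M f f = of_real (l2norm2 M f)"
  unfolding l2inner_def l2norm2_def
  by (simp only: complex_norm_square[symmetric] integral_complex_of_real)

lemma l2inner_cong_AE:
  assumes "AE x in M. f x = g x" and [measurable]: "f \<in> borel_measurable M"
    "g \<in> borel_measurable M" "h \<in> borel_measurable M"
  shows "l2inner M f h = l2inner M g h"
  unfolding l2inner_def using assms(1) by (intro integral_cong_AE) auto

lemma l2norm2_cong_AE:
  assumes "AE x in M. f x = g x" and [measurable]: "f \<in> borel_measurable M" "g \<in> borel_measurable M"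
  shows "l2norm2 M f = l2norm2 M g"
  unfolding l2norm2_def using assms(1) by (intro integral_cong_AE) auto

lemma l2norm2_eq_nn_integral:
  assumes "f \<in> L2 M"
  shows "(\<integral>\<^sup>+x. ennreal ((cmod (f x))\<^sup>2) \<partial>M) = ennreal (l2norm2 M f)"
  unfolding l2norm2_def using assms
  by (intro nn_integral_eq_integral) (auto dest: L2_measurable L2_integrable_norm2)

lemma l2norm2_eq_0_iff:
  assumes "f \<in> L2 M"
  shows "l2norm2 M f = 0 \<longleftrightarrow> (AE x in M. f x = 0)"
proof -
  have "l2norm2 M f = 0 \<longleftrightarrow> (AE x in M. (cmod (f x))\<^sup>2 = 0)"
    unfolding l2norm2_def using assms
    by (intro integral_nonneg_eq_0_iff_AE) (auto dest: L2_measurable L2_integrable_norm2)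
  then show ?thesis
    by simp
qed

lemma l2inner_Cauchy_Schwarz:
  assumes "f \<in> L2 M" "g \<in> L2 M"
  shows "cmod (l2inner M f g) \<le> l2norm M f * l2norm M g"
proof -
  have [measurable]: "f \<in> borel_measurable M" "g \<in> borel_measurable M"
    using assms by (auto dest: L2_measurable)
  have int: "integrable M (\<lambda>x. cmod (f x) * cmod (g x))"
    using integrable_norm[OF l2inner_integrable[OF assms]] by (simp add: norm_mult)
  have I: "(\<integral>\<^sup>+x. ennreal (cmod (f x)) * ennreal (cmod (g x)) \<partial>M)
      = ennreal (\<integral>x. cmod (f x) * cmod (g x) \<partial>M)"
    using int by (simp add: nn_integral_eq_integral flip: ennreal_mult)
  have F: "(\<integral>\<^sup>+x. ennreal (cmod (f x)) ^ 2 \<partial>M) = ennreal (l2norm2 M f)"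
    and G: "(\<integral>\<^sup>+x. ennreal (cmod (g x)) ^ 2 \<partial>M) = ennreal (l2norm2 M g)"
    using l2norm2_eq_nn_integral[OF assms(1)] l2norm2_eq_nn_integral[OF assms(2)]
    by (simp_all add: ennreal_power)
  have "(\<integral>\<^sup>+x. ennreal (cmod (f x)) * ennreal (cmod (g x)) \<partial>M) ^ 2
      \<le> (\<integral>\<^sup>+x. ennreal (cmod (f x)) ^ 2 \<partial>M) * (\<integral>\<^sup>+x. ennreal (cmod (g x)) ^ 2 \<partial>M)"
    by (rule Cauchy_Schwarz_nn_integral) measurable
  then have "(\<integral>x. cmod (f x) * cmod (g x) \<partial>M)\<^sup>2 \<le> l2norm2 M f * l2norm2 M g"
    unfolding I F G
    by (simp add: ennreal_power ennreal_le_iff l2norm2_nonneg flip: ennreal_mult)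
  then have "(\<integral>x. cmod (f x) * cmod (g x) \<partial>M) \<le> l2norm M f * l2norm M g"
    by (simp add: l2norm_eq_sqrt_l2norm2 real_le_rsqrt flip: real_sqrt_mult)
  moreover have "cmod (l2inner M f g) \<le> (\<integral>x. cmod (f x) * cmod (g x) \<partial>M)"
    unfolding l2inner_def using integral_norm_bound[of M "\<lambda>x. f x * cnj (g x)"]
    by (simp add: norm_mult)
  ultimately show ?thesis
    by linarith
qed

lemma L2_of_nn_integral:
  assumes [measurable]: "f \<in> borel_measurable M"
    and "(\<integral>\<^sup>+x. ennreal ((cmod (f x))\<^sup>2) \<partial>M) < \<infinity>"
  shows "f \<in> L2 M"
proof -
  have "integrable M (\<lambda>x. (cmod (f x))\<^sup>2)"
    by (rule integrableI_bounded) (use assms(2) in auto)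
  then show ?thesis
    by (simp add: L2_def)
qed

lemma l2norm2_add_le:
  assumes "f \<in> L2 M" "g \<in> L2 M"
  shows "l2norm2 M (\<lambda>x. f x + g x) \<le> 2 * l2norm2 M f + 2 * l2norm2 M g"
proof -
  have "l2norm2 M (\<lambda>x. f x + g x) \<le> (\<integral>x. 2 * (cmod (f x))\<^sup>2 + 2 * (cmod (g x))\<^sup>2 \<partial>M)"
    unfolding l2norm2_def using assms
    by (intro integral_mono norm_add_power2_le L2_integrable_norm2 L2_add
        Bochner_Integration.integrable_add Bochner_Integration.integrable_mult_right)
  also have "\<dots> = 2 * l2norm2 M f + 2 * l2norm2 M g"
    unfolding l2norm2_def using assms by (simp add: L2_integrable_norm2)
  finally show ?thesis .
qed

lemma tendsto_l2inner_left:
  assumes "\<And>n. S n \<in> L2 M" "h \<in> L2 M" "g \<in> L2 M"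
    and "(\<lambda>n. l2norm2 M (\<lambda>x. h x - S n x)) \<longlonglongrightarrow> 0"
  shows "(\<lambda>n. l2inner M (S n) g) \<longlonglongrightarrow> l2inner M h g"
proof -
  have "(\<lambda>n. sqrt (l2norm2 M (\<lambda>x. h x - S n x)) * l2norm M g) \<longlonglongrightarrow> sqrt 0 * l2norm M g"
    by (intro tendsto_mult_right tendsto_real_sqrt assms(4))
  then have lim: "(\<lambda>n. sqrt (l2norm2 M (\<lambda>x. h x - S n x)) * l2norm M g) \<longlonglongrightarrow> 0"
    by simp
  have "\<forall>n. norm (l2inner M (S n) g - l2inner M h g)
      \<le> sqrt (l2norm2 M (\<lambda>x. h x - S n x)) * l2norm M g"
  proof
    fix n
    have "l2inner M (S n) g - l2inner M h g = - l2inner M (\<lambda>x. h x - S n x) g"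
      using assms(1-3) by (simp add: l2inner_diff_left)
    then show "norm (l2inner M (S n) g - l2inner M h g)
        \<le> sqrt (l2norm2 M (\<lambda>x. h x - S n x)) * l2norm M g"
      using l2inner_Cauchy_Schwarz[OF L2_diff[OF assms(2,1)] assms(3)]
      by (simp add: l2norm_eq_sqrt_l2norm2)
  qed
  from Lim_null_comparison[OF always_eventually[OF this] lim] show ?thesis
    by (simp only: LIM_zero_iff)
qed

section \<open>Orthonormal systems\<close>

definition orthonormal_system :: "'a measure \<Rightarrow> (nat \<Rightarrow> 'a \<Rightarrow> complex) \<Rightarrow> bool" where
  "orthonormal_system M \<psi> \<longleftrightarrow>
     (\<forall>i. \<psi> i \<in> L2 M) \<and> (\<forall>i j. l2inner M (\<psi> i) (\<psi> j) = (if i = j then 1 else 0))"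

lemma orthonormal_basis_imp_system: "orthonormal_basis M \<psi> \<Longrightarrow> orthonormal_system M \<psi>"
  unfolding orthonormal_basis_def orthonormal_system_def by blast

lemma orthonormal_basis_complete:
  "orthonormal_basis M \<psi> \<Longrightarrow> f \<in> L2 M \<Longrightarrow> (\<And>i. l2inner M f (\<psi> i) = 0) \<Longrightarrow> AE x in M. f x = 0"
  unfolding orthonormal_basis_def by blast

lemma orthonormal_system_L2: "orthonormal_system M \<psi> \<Longrightarrow> \<psi> i \<in> L2 M"
  and orthonormal_system_l2inner:
    "orthonormal_system M \<psi> \<Longrightarrow> l2inner M (\<psi> i) (\<psi> j) = (if i = j then 1 else 0)"
  unfolding orthonormal_system_def by blast+

lemma l2norm_orthonormal: "orthonormal_system M \<psi> \<Longrightarrow> l2norm M (\<psi> j) = 1"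
  using orthonormal_system_l2inner[of M \<psi> j j] by (simp add: l2inner_self l2norm_eq_sqrt_l2norm2)

lemma L2_lincomb:
  assumes "orthonormal_system M \<psi>"
  shows "(\<lambda>x. \<Sum>i\<in>A. c i * \<psi> i x) \<in> L2 M"
  using assms by (intro L2_sum L2_mult orthonormal_system_L2)

lemma l2inner_lincomb_right:
  assumes "\<And>i. \<psi> i \<in> L2 M" "f \<in> L2 M"
  shows "l2inner M f (\<lambda>x. \<Sum>i\<in>A. c i * \<psi> i x) = (\<Sum>i\<in>A. cnj (c i) * l2inner M f (\<psi> i))"
  using assms by (simp add: l2inner_sum_right L2_mult l2inner_mult_right)

lemma l2inner_lincomb_left:
  assumes "\<And>i. \<psi> i \<in> L2 M" "h \<in> L2 M"
  shows "l2inner M (\<lambda>x. \<Sum>i\<in>A. c i * \<psi> i x) h = (\<Sum>i\<in>A. c i * l2inner M (\<psi> i) h)"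
  using assms by (simp add: l2inner_sum_left L2_mult l2inner_mult_left)

lemma l2inner_lincomb_orthonormal:
  assumes "orthonormal_system M \<psi>" "finite A"
  shows "l2inner M (\<lambda>x. \<Sum>i\<in>A. c i * \<psi> i x) (\<psi> j) = (if j \<in> A then c j else 0)"
  using assms
  by (simp add: l2inner_lincomb_left orthonormal_system_L2 orthonormal_system_l2inner
      if_distrib sum.delta' cong: if_cong)

lemma l2norm2_lincomb_orthonormal:
  assumes "orthonormal_system M \<psi>" "finite A"
  shows "l2norm2 M (\<lambda>x. \<Sum>i\<in>A. c i * \<psi> i x) = (\<Sum>i\<in>A. (cmod (c i))\<^sup>2)"
proof -
  let ?S = "\<lambda>x. \<Sum>i\<in>A. c i * \<psi> i x"
  have "of_real (l2norm2 M ?S) = l2inner M ?S ?S"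
    by (simp add: l2inner_self)
  also have "\<dots> = (\<Sum>i\<in>A. cnj (c i) * c i)"
    using assms
    by (simp add: l2inner_lincomb_right[OF orthonormal_system_L2[OF assms(1)]] L2_lincomb
        l2inner_lincomb_orthonormal)
  also have "\<dots> = of_real (\<Sum>i\<in>A. (cmod (c i))\<^sup>2)"
    by (simp add: complex_norm_square[symmetric] mult.commute del: of_real_power)
  finally show ?thesis
    by (simp only: of_real_eq_iff)
qed

lemma le_power2_if_le_mult_sqrt:
  fixes s C :: real
  assumes "0 \<le> s" "s \<le> C * sqrt s"
  shows "s \<le> C\<^sup>2"
proof (cases "s = 0")
  case False
  with assms have pos: "sqrt s > 0"
    by simp
  from assms have "sqrt s * sqrt s \<le> C * sqrt s"
    by simp
  then have "sqrt s \<le> C"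
    using pos by (rule mult_right_le_imp_le)
  then have "(sqrt s)\<^sup>2 \<le> C\<^sup>2"
    using pos by (intro power_mono) auto
  with assms show ?thesis
    by simp
qed simp

lemma bessel_inequality:
  assumes "orthonormal_system M \<psi>" "finite A" "f \<in> L2 M"
  shows "(\<Sum>i\<in>A. (cmod (l2inner M f (\<psi> i)))\<^sup>2) \<le> l2norm2 M f"
proof -
  define c where "c i = l2inner M f (\<psi> i)" for i
  define s where "s = (\<Sum>i\<in>A. (cmod (c i))\<^sup>2)"
  let ?P = "\<lambda>x. \<Sum>i\<in>A. c i * \<psi> i x"
  have s_nonneg: "0 \<le> s"
    by (simp add: s_def sum_nonneg)
  have "l2inner M f ?P = (\<Sum>i\<in>A. cnj (c i) * c i)"
    using assms by (simp add: l2inner_lincomb_right[OF orthonormal_system_L2[OF assms(1)]] flip: c_def)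
  also have "\<dots> = of_real s"
    by (simp add: s_def complex_norm_square[symmetric] mult.commute del: of_real_power)
  finally have "l2inner M f ?P = of_real s" .
  then have "s = cmod (l2inner M f ?P)"
    using s_nonneg by simp
  also have "\<dots> \<le> l2norm M f * l2norm M ?P"
    using assms by (intro l2inner_Cauchy_Schwarz L2_lincomb)
  also have "l2norm M ?P = sqrt s"
    using assms by (simp add: l2norm_eq_sqrt_l2norm2 l2norm2_lincomb_orthonormal s_def)
  finally have "s \<le> (l2norm M f)\<^sup>2"
    using s_nonneg by (intro le_power2_if_le_mult_sqrt)
  then show ?thesis
    by (simp add: s_def c_def l2norm_eq_sqrt_l2norm2 l2norm2_nonneg)
qed

section \<open>Completeness and the Riesz--Fischer theorem\<close>

lemma le_amgm_pow2_weights: "t \<le> ((1/2)^k + 2^k * t\<^sup>2) / 2" for t :: real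
proof -
  have "2^k * ((1/2)^k + 2^k * t\<^sup>2) = 1 + (2^k * t)\<^sup>2"
    by (simp add: power_mult_distrib power_one_over algebra_simps power2_eq_square)
  then have "2^k * (2 * t) \<le> 2^k * ((1/2)^k + 2^k * t\<^sup>2)"
    using sum_squares_bound[of 1 "2^k * t"] by (simp add: algebra_simps)
  then have "2 * t \<le> (1/2)^k + 2^k * t\<^sup>2"
    by (rule mult_left_le_imp_le) simp
  then show ?thesis
    by simp
qed

lemma AE_summable_if_l2norm2_le_quarter_power:
  assumes L2: "\<And>k. D k \<in> L2 M" and small: "\<And>k. l2norm2 M (D k) \<le> (1/4)^k"
  shows "AE x in M. summable (\<lambda>k. D k x)"
proof -
  have [measurable]: "D k \<in> borel_measurable M" for k
    using L2 by (rule L2_measurable)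
  \<comment> \<open>The weights \<open>2^k\<close> keep \<open>G\<close> integrable, and where \<open>G x < \<infinity>\<close> the bound
    \<open>|d| \<le> ((1/2)^k + 2^k |d|\<^sup>2) / 2\<close> dominates \<open>|D k x|\<close> by a summable sequence.\<close>
  define G where "G x = (\<Sum>k. ennreal (2^k * (cmod (D k x))\<^sup>2))" for x
  have term_bound: "(\<integral>\<^sup>+x. ennreal (2^k * (cmod (D k x))\<^sup>2) \<partial>M) \<le> ennreal ((1/2)^k)" for k
  proof -
    have "(\<integral>\<^sup>+x. ennreal (2^k * (cmod (D k x))\<^sup>2) \<partial>M)
        = ennreal (2^k) * (\<integral>\<^sup>+x. ennreal ((cmod (D k x))\<^sup>2) \<partial>M)"
      by (simp add: ennreal_mult nn_integral_cmult)
    also have "\<dots> = ennreal (2^k * l2norm2 M (D k))"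
      by (simp add: l2norm2_eq_nn_integral L2 ennreal_mult l2norm2_nonneg)
    also have "\<dots> \<le> ennreal ((1/2)^k)"
    proof (rule ennreal_leI)
      have "2^k * l2norm2 M (D k) \<le> 2^k * (1/4)^k"
        using small by (intro mult_left_mono) auto
      also have "\<dots> = (1/2)^k"
        by (simp flip: power_mult_distrib)
      finally show "2^k * l2norm2 M (D k) \<le> (1/2)^k" .
    qed
    finally show ?thesis .
  qed
  have "(\<integral>\<^sup>+x. G x \<partial>M) = (\<Sum>k. (\<integral>\<^sup>+x. ennreal (2^k * (cmod (D k x))\<^sup>2) \<partial>M))"
    unfolding G_def by (rule nn_integral_suminf) measurable
  also have "\<dots> \<le> (\<Sum>k. ennreal ((1/2)^k))"
    by (intro suminf_le term_bound summableI)
  also have "\<dots> = ennreal (\<Sum>k. (1/2)^k)"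
    by (rule suminf_ennreal2) (auto simp: summable_geometric)
  finally have "(\<integral>\<^sup>+x. G x \<partial>M) < \<infinity>"
    by (simp add: le_less_trans)
  then have "AE x in M. G x < \<infinity>"
    unfolding G_def by (intro finite_nn_integral_imp_ae_finite) measurable
  then show ?thesis
  proof eventually_elim
    case (elim x)
    then have "summable (\<lambda>k. 2^k * (cmod (D k x))\<^sup>2)"
      unfolding G_def by (intro summable_suminf_not_top) auto
    then have "summable (\<lambda>k. ((1/2)^k + 2^k * (cmod (D k x))\<^sup>2) / 2)"
      by (intro summable_divide summable_add summable_geometric) simp_all
    then show "summable (\<lambda>k. D k x)"
      by (rule summable_comparison_test'[where N=0]) (rule le_amgm_pow2_weights)
  qed
qed

lemma l2norm2_minus_commute: "l2norm2 M (\<lambda>x. f x - g x) = l2norm2 M (\<lambda>x. g x - f x)"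
  unfolding l2norm2_def by (simp add: norm_minus_commute)

lemma nn_integral_norm2_le_if_AE_limit:
  fixes S :: "nat \<Rightarrow> 'a \<Rightarrow> complex"
  assumes lim: "AE x in M. (\<lambda>m. S m x) \<longlonglongrightarrow> h x"
    and bound: "\<forall>\<^sub>F m in sequentially. (\<integral>\<^sup>+x. ennreal ((cmod (S m x - g x))\<^sup>2) \<partial>M) \<le> b"
    and [measurable]: "\<And>m. S m \<in> borel_measurable M" "g \<in> borel_measurable M"
  shows "(\<integral>\<^sup>+x. ennreal ((cmod (h x - g x))\<^sup>2) \<partial>M) \<le> b"
proof -
  have "(\<integral>\<^sup>+x. ennreal ((cmod (h x - g x))\<^sup>2) \<partial>M)
      = (\<integral>\<^sup>+x. liminf (\<lambda>m. ennreal ((cmod (S m x - g x))\<^sup>2)) \<partial>M)"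
  proof (rule nn_integral_cong_AE)
    show "AE x in M. ennreal ((cmod (h x - g x))\<^sup>2) = liminf (\<lambda>m. ennreal ((cmod (S m x - g x))\<^sup>2))"
      using lim
    proof eventually_elim
      case (elim x)
      have "(\<lambda>m. ennreal ((cmod (S m x - g x))\<^sup>2)) \<longlonglongrightarrow> ennreal ((cmod (h x - g x))\<^sup>2)"
        by (intro tendsto_intros elim)
      from lim_imp_Liminf[OF _ this] show ?case
        by simp
    qed
  qed
  also have "\<dots> \<le> liminf (\<lambda>m. \<integral>\<^sup>+x. ennreal ((cmod (S m x - g x))\<^sup>2) \<partial>M)"
    by (rule nn_integral_liminf) measurable
  also have "\<dots> \<le> b"
    using Liminf_le[OF _ bound] by simp
  finally show ?thesis .
qed

lemma L2_limit_if_fast_Cauchy: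
  assumes L2: "\<And>n. S n \<in> L2 M"
    and fast: "\<And>k m. k \<le> m \<Longrightarrow> l2norm2 M (\<lambda>x. S m x - S k x) \<le> (1/4)^k"
  shows "\<exists>h\<in>L2 M. \<forall>k. l2norm2 M (\<lambda>x. h x - S k x) \<le> (1/4)^k"
proof -
  have [measurable]: "S n \<in> borel_measurable M" for n
    using L2 by (rule L2_measurable)
  define h where "h x = lim (\<lambda>k. S k x)" for x
  have [measurable]: "h \<in> borel_measurable M"
    unfolding h_def by measurable
  have "AE x in M. summable (\<lambda>k. S (Suc k) x - S k x)"
    using L2 fast by (intro AE_summable_if_l2norm2_le_quarter_power L2_diff) auto
  then have AE_lim: "AE x in M. (\<lambda>k. S k x) \<longlonglongrightarrow> h x"
  proof eventually_elim
    case (elim x)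
    have telescope: "S 0 x + (\<Sum>i<k. S (Suc i) x - S i x) = S k x" for k
      by (simp add: sum_lessThan_telescope[where f="\<lambda>i. S i x"])
    have "(\<lambda>k. S 0 x + (\<Sum>i<k. S (Suc i) x - S i x)) \<longlonglongrightarrow> S 0 x + (\<Sum>i. S (Suc i) x - S i x)"
      by (intro tendsto_add tendsto_const summable_LIMSEQ elim)
    then have "convergent (\<lambda>k. S k x)"
      unfolding telescope convergent_def by blast
    then show ?case
      by (simp add: h_def convergent_LIMSEQ_iff)
  qed
  have nn_bound: "(\<integral>\<^sup>+x. ennreal ((cmod (h x - S k x))\<^sup>2) \<partial>M) \<le> ennreal ((1/4)^k)" for k
  proof (rule nn_integral_norm2_le_if_AE_limit[OF AE_lim])
    show "\<forall>\<^sub>F m in sequentially. (\<integral>\<^sup>+x. ennreal ((cmod (S m x - S k x))\<^sup>2) \<partial>M) \<le> ennreal ((1/4)^k)"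
      using eventually_ge_at_top[of k]
      by eventually_elim (use fast in \<open>simp add: l2norm2_eq_nn_integral L2 L2_diff\<close>)
  qed measurable
  have hS: "(\<lambda>x. h x - S k x) \<in> L2 M" for k
    by (rule L2_of_nn_integral) (use nn_bound[of k] in \<open>auto simp: le_less_trans\<close>)
  have "(\<lambda>x. (h x - S 0 x) + S 0 x) \<in> L2 M"
    by (intro L2_add hS L2)
  moreover have "l2norm2 M (\<lambda>x. h x - S k x) \<le> (1/4)^k" for k
    using nn_bound[of k] by (simp add: l2norm2_eq_nn_integral[OF hS])
  ultimately show ?thesis
    by auto
qed

lemma L2_limit_if_Cauchy:
  assumes L2: "\<And>n. S n \<in> L2 M"
    and Cauchy: "\<And>e. 0 < e \<Longrightarrow> \<exists>N. \<forall>m\<ge>N. \<forall>n\<ge>m. l2norm2 M (\<lambda>x. S n x - S m x) < e"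
  shows "\<exists>h\<in>L2 M. (\<lambda>n. l2norm2 M (\<lambda>x. h x - S n x)) \<longlonglongrightarrow> 0"
proof -
  have "\<forall>k. \<exists>N. \<forall>m\<ge>N. \<forall>n\<ge>m. l2norm2 M (\<lambda>x. S n x - S m x) < (1/4)^k"
    using Cauchy by simp
  then obtain N where N: "\<And>k m n. N k \<le> m \<Longrightarrow> m \<le> n \<Longrightarrow> l2norm2 M (\<lambda>x. S n x - S m x) < (1/4)^k"
    by metis
  define r where "r k = k + (\<Sum>i\<le>k. N i)" for k
  have r_mono: "r k \<le> r m" if "k \<le> m" for k m
    unfolding r_def using that by (intro add_mono sum_mono2) auto
  have r_N: "N k \<le> r k" for k
    unfolding r_def by (metis atMost_iff finite_atMost le_add2 order_refl order_trans member_le_sum zero_le)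
  have "l2norm2 M (\<lambda>x. S (r m) x - S (r k) x) \<le> (1/4)^k" if "k \<le> m" for k m
    using N[OF r_N r_mono[OF that]] by simp
  then obtain h where h: "h \<in> L2 M" and h_fast: "\<And>k. l2norm2 M (\<lambda>x. h x - S (r k) x) \<le> (1/4)^k"
    using L2_limit_if_fast_Cauchy[of "\<lambda>k. S (r k)" M] L2 by blast
  have tail: "l2norm2 M (\<lambda>x. h x - S n x) \<le> 4 * (1/4)^k" if "r k \<le> n" for k n
  proof -
    have "l2norm2 M (\<lambda>x. (h x - S (r k) x) + (S (r k) x - S n x))
        \<le> 2 * l2norm2 M (\<lambda>x. h x - S (r k) x) + 2 * l2norm2 M (\<lambda>x. S (r k) x - S n x)"
      using h L2 by (intro l2norm2_add_le L2_diff)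
    also have "\<dots> \<le> 2 * (1/4)^k + 2 * (1/4)^k"
      using h_fast[of k] N[OF r_N that] l2norm2_minus_commute[of M "S (r k)" "S n"] by simp
    finally show ?thesis
      by simp
  qed
  have "(\<lambda>n. l2norm2 M (\<lambda>x. h x - S n x)) \<longlonglongrightarrow> 0"
  proof (rule LIMSEQ_I)
    fix e :: real
    assume "0 < e"
    then obtain k where k: "(1/4)^k < e / 4"
      using real_arch_pow_inv[of "e / 4" "1/4"] by auto
    have "norm (l2norm2 M (\<lambda>x. h x - S n x)) < e" if "r k \<le> n" for n
      using tail[OF that] k by (simp add: l2norm2_nonneg)
    then show "\<exists>n0. \<forall>n\<ge>n0. norm (l2norm2 M (\<lambda>x. h x - S n x) - 0) < e"
      by auto
  qed
  with h show ?thesis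
    by blast
qed

lemma riesz_fischer:
  assumes ons: "orthonormal_system M \<psi>" and square_summable: "summable (\<lambda>j. (cmod (a j))\<^sup>2)"
  shows "\<exists>h\<in>L2 M. (\<forall>j. l2inner M h (\<psi> j) = a j) \<and>
           (\<lambda>n. l2norm2 M (\<lambda>x. h x - (\<Sum>j<n. a j * \<psi> j x))) \<longlonglongrightarrow> 0"
proof -
  define S where "S n x = (\<Sum>j<n. a j * \<psi> j x)" for n x
  have S: "S n \<in> L2 M" for n
    unfolding S_def using ons by (rule L2_lincomb)
  have S_diff: "l2norm2 M (\<lambda>x. S n x - S m x) = (\<Sum>j\<in>{m..<n}. (cmod (a j))\<^sup>2)" if "m \<le> n" for m n
  proof -
    have "S n x - S m x = (\<Sum>j\<in>{m..<n}. a j * \<psi> j x)" for x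
      using that by (simp add: S_def lessThan_atLeast0 sum_diff_nat_ivl)
    then show ?thesis
      using l2norm2_lincomb_orthonormal[OF ons, of "{m..<n}" a] by simp
  qed
  have "\<exists>N. \<forall>m\<ge>N. \<forall>n\<ge>m. l2norm2 M (\<lambda>x. S n x - S m x) < e" if "0 < e" for e
  proof -
    obtain N where "\<forall>m\<ge>N. \<forall>n. norm (\<Sum>j\<in>{m..<n}. (cmod (a j))\<^sup>2) < e"
      using square_summable \<open>0 < e\<close> unfolding summable_Cauchy by blast
    then have "\<forall>m\<ge>N. \<forall>n\<ge>m. l2norm2 M (\<lambda>x. S n x - S m x) < e"
      by (simp add: S_diff sum_nonneg)
    then show ?thesis
      by blast
  qed
  then obtain h where h: "h \<in> L2 M" and lim: "(\<lambda>n. l2norm2 M (\<lambda>x. h x - S n x)) \<longlonglongrightarrow> 0"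
    using L2_limit_if_Cauchy[of S M, OF S] by blast
  have "l2inner M h (\<psi> j) = a j" for j
  proof -
    have "(\<lambda>n. l2inner M (S n) (\<psi> j)) \<longlonglongrightarrow> l2inner M h (\<psi> j)"
      by (intro tendsto_l2inner_left S h lim orthonormal_system_L2[OF ons])
    moreover have "(\<lambda>n. l2inner M (S n) (\<psi> j)) \<longlonglongrightarrow> a j"
      using eventually_gt_at_top[of j]
      by (rule tendsto_eventually[OF eventually_mono])
        (simp add: S_def[abs_def] l2inner_lincomb_orthonormal[OF ons])
    ultimately show ?thesis
      by (rule LIMSEQ_unique)
  qed
  with h lim show ?thesis
    unfolding S_def by blast
qed

lemma projN_L2: "orthonormal_system M \<psi> \<Longrightarrow> projN M \<psi> n g \<in> L2 M"
  unfolding projN_def by (rule L2_lincomb)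

lemma l2norm2_projN_tendsto_0:
  assumes onb: "orthonormal_basis M \<psi>" and g: "g \<in> L2 M"
  shows "(\<lambda>n. l2norm2 M (\<lambda>x. g x - projN M \<psi> n g x)) \<longlonglongrightarrow> 0"
proof -
  have ons: "orthonormal_system M \<psi>"
    using onb by (rule orthonormal_basis_imp_system)
  have "summable (\<lambda>j. (cmod (l2inner M g (\<psi> j)))\<^sup>2)"
    using bessel_inequality[OF ons _ g] by (intro summableI_nonneg_bounded) auto
  then obtain h where h: "h \<in> L2 M" "\<And>j. l2inner M h (\<psi> j) = l2inner M g (\<psi> j)"
    and lim: "(\<lambda>n. l2norm2 M (\<lambda>x. h x - projN M \<psi> n g x)) \<longlonglongrightarrow> 0"
    using riesz_fischer[OF ons, of "\<lambda>j. l2inner M g (\<psi> j)"] unfolding projN_def by blast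
  have "AE x in M. g x - h x = 0"
    using g h ons
    by (intro orthonormal_basis_complete[OF onb] L2_diff) (simp_all add: l2inner_diff_left orthonormal_system_L2)
  then have "l2norm2 M (\<lambda>x. g x - projN M \<psi> n g x) = l2norm2 M (\<lambda>x. h x - projN M \<psi> n g x)" for n
    using g h(1) projN_L2[OF ons]
    by (intro l2norm2_cong_AE) (auto intro: L2_measurable L2_diff)
  with lim show ?thesis
    by simp
qed

section \<open>Weak convergence\<close>

lemma l2inner_diff_le_approx:
  assumes u: "u \<in> L2 M" and v: "v \<in> L2 M" and "g \<in> L2 M" "P \<in> L2 M"
  shows "cmod (l2inner M u g - l2inner M v g)
    \<le> (l2norm M u + l2norm M v) * l2norm M (\<lambda>x. g x - P x) + cmod (l2inner M u P - l2inner M v P)"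
proof -
  have gP: "(\<lambda>x. g x - P x) \<in> L2 M"
    using assms by (intro L2_diff)
  have tri: "cmod (a - b + c) \<le> cmod a + cmod b + cmod c" for a b c :: complex
    using norm_triangle_ineq[of "a - b" c] norm_triangle_ineq4[of a b] by linarith
  have "l2inner M u g - l2inner M v g
      = l2inner M u (\<lambda>x. g x - P x) - l2inner M v (\<lambda>x. g x - P x) + (l2inner M u P - l2inner M v P)"
    using assms by (simp add: l2inner_diff_right)
  then have "cmod (l2inner M u g - l2inner M v g)
      \<le> cmod (l2inner M u (\<lambda>x. g x - P x)) + cmod (l2inner M v (\<lambda>x. g x - P x))
        + cmod (l2inner M u P - l2inner M v P)"
    by (simp only: tri)
  also have "\<dots> \<le> l2norm M u * l2norm M (\<lambda>x. g x - P x) + l2norm M v * l2norm M (\<lambda>x. g x - P x)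
        + cmod (l2inner M u P - l2inner M v P)"
    using l2inner_Cauchy_Schwarz[OF u gP] l2inner_Cauchy_Schwarz[OF v gP] by linarith
  finally show ?thesis
    by (simp add: algebra_simps)
qed

lemma weak_conv_if_coefficients_converge:
  assumes onb: "orthonormal_basis M \<psi>"
    and u: "\<And>i. u i \<in> L2 M" and bounded: "\<And>i. l2norm M (u i) \<le> B" and f: "f \<in> L2 M"
    and coefficients: "\<And>j. (\<lambda>i. l2inner M (u i) (\<psi> j)) \<longlonglongrightarrow> l2inner M f (\<psi> j)"
  shows "weak_conv M u f"
  unfolding weak_conv_def
proof (intro ballI LIMSEQ_I)
  fix g and e :: real
  assume g: "g \<in> L2 M" and "0 < e"
  have ons: "orthonormal_system M \<psi>"
    using onb by (rule orthonormal_basis_imp_system)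
  define \<delta> where "\<delta> = e / (2 * (\<bar>B\<bar> + l2norm M f + 1))"
  have \<delta>: "0 < \<delta>" "(\<bar>B\<bar> + l2norm M f) * \<delta> \<le> e / 2"
    using \<open>0 < e\<close> l2norm_nonneg[of M f] by (auto simp: \<delta>_def field_simps)
  have "\<forall>\<^sub>F n in sequentially. l2norm2 M (\<lambda>x. g x - projN M \<psi> n g x) < \<delta>\<^sup>2"
    using l2norm2_projN_tendsto_0[OF onb g] \<delta>(1) by (intro order_tendstoD) auto
  then obtain n where n: "l2norm2 M (\<lambda>x. g x - projN M \<psi> n g x) < \<delta>\<^sup>2"
    unfolding eventually_sequentially by blast
  define P where "P = projN M \<psi> n g"
  have P: "P \<in> L2 M"
    unfolding P_def using ons by (rule projN_L2)
  have small: "l2norm M (\<lambda>x. g x - P x) < \<delta>"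
    using real_sqrt_less_mono[OF n] \<delta>(1) by (simp add: P_def l2norm_eq_sqrt_l2norm2)
  have "(\<lambda>i. l2inner M (u i) P) \<longlonglongrightarrow> l2inner M f P"
    unfolding P_def projN_def l2inner_lincomb_right[OF orthonormal_system_L2[OF ons] u]
      l2inner_lincomb_right[OF orthonormal_system_L2[OF ons] f]
    by (intro tendsto_intros coefficients)
  then obtain i0 where i0: "\<And>i. i0 \<le> i \<Longrightarrow> cmod (l2inner M (u i) P - l2inner M f P) < e / 2"
    using LIMSEQ_D[of _ "l2inner M f P" "e / 2"] \<open>0 < e\<close> by auto
  have "cmod (l2inner M (u i) g - l2inner M f g) < e" if "i0 \<le> i" for i
  proof -
    have "cmod (l2inner M (u i) g - l2inner M f g)
        \<le> (l2norm M (u i) + l2norm M f) * l2norm M (\<lambda>x. g x - P x)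
          + cmod (l2inner M (u i) P - l2inner M f P)"
      using u f g P by (rule l2inner_diff_le_approx)
    also have "\<dots> < (\<bar>B\<bar> + l2norm M f) * \<delta> + e / 2"
      using i0[OF that] bounded[of i] small
      by (intro add_le_less_mono mult_mono) (auto simp: l2norm_nonneg)
    also have "\<dots> \<le> e"
      using \<delta>(2) by simp
    finally show ?thesis .
  qed
  then show "\<exists>i0. \<forall>i\<ge>i0. norm (l2inner M (u i) g - l2inner M f g) < e"
    by auto
qed

lemma diagonal_convergent_subseq:
  fixes X :: "nat \<Rightarrow> nat \<Rightarrow> 'a::heine_borel"
  assumes bounded: "\<And>k. bounded (range (X k))"
  obtains d where "strict_mono d" "\<And>k. convergent (\<lambda>i. X k (d i))"
proof -
  interpret subseqs "\<lambda>k s. convergent (\<lambda>i. X k (s i))"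
  proof
    fix k and s :: "nat \<Rightarrow> nat"
    assume "strict_mono s"
    have "bounded (range (X k \<circ> s))"
      using bounded[of k] by (rule bounded_subset) auto
    then obtain l r where "strict_mono r" "((X k \<circ> s) \<circ> r) \<longlonglongrightarrow> l"
      using bounded_imp_convergent_subsequence by blast
    then show "\<exists>r. strict_mono r \<and> convergent (\<lambda>i. X k ((s \<circ> r) i))"
      unfolding convergent_def by (auto simp: o_def)
  qed
  have "convergent (\<lambda>i. X k (diagseq i))" for k
  proof -
    have "convergent (\<lambda>i. X k ((diagseq \<circ> (+) (Suc k)) i))"
    proof (rule diagseq_holds)
      fix r s n
      assume "strict_mono (r :: nat \<Rightarrow> nat)" "convergent (\<lambda>i. X n (s i))"
      then show "convergent (\<lambda>i. X n ((s \<circ> r) i))"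
        unfolding convergent_def using LIMSEQ_subseq_LIMSEQ by (fastforce simp: o_def)
    qed
    then have "convergent (\<lambda>i. X k (diagseq (i + Suc k)))"
      by (simp add: o_def add.commute)
    then show ?thesis
      by (rule convergent_ignore_initial_segment[THEN iffD1])
  qed
  with subseq_diagseq show ?thesis
    by (rule that)
qed

lemma summable_norm2_limit_coefficients:
  assumes ons: "orthonormal_system M \<psi>"
    and u: "\<And>i. u i \<in> L2 M" and bounded: "\<And>i. l2norm M (u i) \<le> B"
    and a: "\<And>j. (\<lambda>i. l2inner M (u i) (\<psi> j)) \<longlonglongrightarrow> a j"
  shows "summable (\<lambda>j. (cmod (a j))\<^sup>2)"
proof (rule summableI_nonneg_bounded)
  fix n
  have "(\<Sum>j<n. (cmod (l2inner M (u i) (\<psi> j)))\<^sup>2) \<le> B\<^sup>2" for i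
  proof -
    have "(\<Sum>j<n. (cmod (l2inner M (u i) (\<psi> j)))\<^sup>2) \<le> l2norm2 M (u i)"
      using ons u by (rule bessel_inequality[OF _ finite_lessThan])
    also have "\<dots> = (l2norm M (u i))\<^sup>2"
      by (simp add: l2norm_eq_sqrt_l2norm2 l2norm2_nonneg)
    also have "\<dots> \<le> B\<^sup>2"
      using bounded[of i] by (intro power_mono) (auto simp: l2norm_nonneg)
    finally show ?thesis .
  qed
  moreover have "(\<lambda>i. \<Sum>j<n. (cmod (l2inner M (u i) (\<psi> j)))\<^sup>2) \<longlonglongrightarrow> (\<Sum>j<n. (cmod (a j))\<^sup>2)"
    by (intro tendsto_intros a)
  ultimately show "(\<Sum>j<n. (cmod (a j))\<^sup>2) \<le> B\<^sup>2"
    by (intro LIMSEQ_le_const2) auto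
qed simp

lemma L2_bounded_weakly_convergent_subseq:
  fixes u :: "nat \<Rightarrow> 'a \<Rightarrow> complex"
  assumes onb: "orthonormal_basis M \<psi>"
    and u: "\<And>i. u i \<in> L2 M" and bounded: "\<And>i. l2norm M (u i) \<le> B"
  obtains r f where "strict_mono r" "f \<in> L2 M" "weak_conv M (u \<circ> r) f"
proof -
  have ons: "orthonormal_system M \<psi>"
    using onb by (rule orthonormal_basis_imp_system)
  have "cmod (l2inner M (u i) (\<psi> j)) \<le> B" for i j
    using l2inner_Cauchy_Schwarz[OF u orthonormal_system_L2[OF ons], of i j] bounded[of i]
    by (simp add: l2norm_orthonormal[OF ons])
  then have "bounded (range (\<lambda>i. l2inner M (u i) (\<psi> j)))" for j
    unfolding bounded_iff by blast
  then obtain d where d: "strict_mono d" and "\<And>j. convergent (\<lambda>i. l2inner M (u (d i)) (\<psi> j))"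
    using diagonal_convergent_subseq[of "\<lambda>j i. l2inner M (u i) (\<psi> j)"] by blast
  then obtain a where a: "\<And>j. (\<lambda>i. l2inner M (u (d i)) (\<psi> j)) \<longlonglongrightarrow> a j"
    unfolding convergent_def by metis
  have "summable (\<lambda>j. (cmod (a j))\<^sup>2)"
    using ons u bounded a by (rule summable_norm2_limit_coefficients[where u="\<lambda>i. u (d i)"])
  then obtain f where f: "f \<in> L2 M" "\<And>j. l2inner M f (\<psi> j) = a j"
    using riesz_fischer[OF ons] by blast
  have "weak_conv M (u \<circ> d) f"
  proof (rule weak_conv_if_coefficients_converge[OF onb _ _ f(1)])
    show "(u \<circ> d) i \<in> L2 M" for i
      using u by simp
    show "l2norm M ((u \<circ> d) i) \<le> B" for i
      using bounded by simp
    show "(\<lambda>i. l2inner M ((u \<circ> d) i) (\<psi> j)) \<longlonglongrightarrow> l2inner M f (\<psi> j)" for j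
      using a[of j] by (simp add: f(2))
  qed
  with d f(1) show ?thesis
    by (rule that)
qed

section \<open>The adjoint of the Koopman operator\<close>

lemma koopman_bounded_L2: "koopman_bounded M T \<Longrightarrow> f \<in> L2 M \<Longrightarrow> (\<lambda>x. f (T x)) \<in> L2 M"
  unfolding koopman_bounded_def by (auto simp: o_def)

lemma koopman_bounded_l2norm2:
  assumes "koopman_bounded M T"
  obtains C where "0 \<le> C" "\<And>f. f \<in> L2 M \<Longrightarrow> l2norm2 M (\<lambda>x. f (T x)) \<le> C * l2norm2 M f"
proof -
  obtain C where C: "\<And>f. f \<in> L2 M \<Longrightarrow> l2norm M (\<lambda>x. f (T x)) \<le> C * l2norm M f"
    using assms unfolding koopman_bounded_def o_def by blast
  have "l2norm2 M (\<lambda>x. f (T x)) \<le> C\<^sup>2 * l2norm2 M f" if "f \<in> L2 M" for f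
  proof -
    have "(l2norm M (\<lambda>x. f (T x)))\<^sup>2 \<le> (C * l2norm M f)\<^sup>2"
      using C[OF that] by (intro power_mono) (auto simp: l2norm_nonneg)
    then show ?thesis
      by (simp add: l2norm_eq_sqrt_l2norm2 l2norm2_nonneg power_mult_distrib)
  qed
  then show ?thesis
    using that[of "C\<^sup>2"] by simp
qed

lemma koopman_matrix_row_bound:
  assumes ons: "orthonormal_system M \<psi>" and K: "koopman_bounded M T" and "0 \<le> C"
    and C: "\<And>f. f \<in> L2 M \<Longrightarrow> l2norm2 M (\<lambda>x. f (T x)) \<le> C * l2norm2 M f"
  shows "(\<Sum>m<n. (cmod (l2inner M (\<lambda>x. \<psi> m (T x)) (\<psi> j)))\<^sup>2) \<le> C"
proof -
  define \<beta> where "\<beta> m = l2inner M (\<lambda>x. \<psi> m (T x)) (\<psi> j)" for m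
  define s where "s = (\<Sum>m<n. (cmod (\<beta> m))\<^sup>2)"
  define u where "u x = (\<Sum>m<n. cnj (\<beta> m) * \<psi> m x)" for x
  have u: "u \<in> L2 M"
    unfolding u_def using ons by (rule L2_lincomb)
  have "0 \<le> s"
    by (simp add: s_def sum_nonneg)
  have "l2norm2 M u = s"
    unfolding u_def[abs_def] s_def by (simp add: l2norm2_lincomb_orthonormal[OF ons])
  then have Ku: "l2norm M (\<lambda>x. u (T x)) \<le> sqrt C * sqrt s"
    using C[OF u] by (simp add: l2norm_eq_sqrt_l2norm2 flip: real_sqrt_mult)
  have "l2inner M (\<lambda>x. u (T x)) (\<psi> j) = (\<Sum>m<n. cnj (\<beta> m) * \<beta> m)"
    unfolding u_def \<beta>_def
    by (rule l2inner_lincomb_left[where \<psi>="\<lambda>m x. \<psi> m (T x)",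
          OF koopman_bounded_L2[OF K orthonormal_system_L2[OF ons]] orthonormal_system_L2[OF ons]])
  also have "\<dots> = of_real s"
    by (simp add: s_def complex_norm_square[symmetric] mult.commute del: of_real_power)
  finally have "s = cmod (l2inner M (\<lambda>x. u (T x)) (\<psi> j))"
    using \<open>0 \<le> s\<close> by simp
  also have "\<dots> \<le> l2norm M (\<lambda>x. u (T x)) * l2norm M (\<psi> j)"
    by (intro l2inner_Cauchy_Schwarz koopman_bounded_L2[OF K] u orthonormal_system_L2[OF ons])
  also have "\<dots> \<le> sqrt C * sqrt s"
    using Ku by (simp add: l2norm_orthonormal[OF ons])
  finally have "s \<le> (sqrt C)\<^sup>2"
    using \<open>0 \<le> s\<close> by (intro le_power2_if_le_mult_sqrt)
  with \<open>0 \<le> C\<close> show ?thesis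
    by (simp add: s_def \<beta>_def)
qed

lemma l2norm2_koopman_projN_tendsto_0:
  assumes onb: "orthonormal_basis M \<psi>" and K: "koopman_bounded M T" and u: "u \<in> L2 M"
  shows "(\<lambda>n. l2norm2 M (\<lambda>x. u (T x) - projN M \<psi> n u (T x))) \<longlonglongrightarrow> 0"
proof -
  obtain C where C: "\<And>f. f \<in> L2 M \<Longrightarrow> l2norm2 M (\<lambda>x. f (T x)) \<le> C * l2norm2 M f"
    using koopman_bounded_l2norm2[OF K] by blast
  have P: "projN M \<psi> n u \<in> L2 M" for n
    using onb by (intro projN_L2 orthonormal_basis_imp_system)
  show ?thesis
  proof (rule tendsto_sandwich[OF _ _ tendsto_const])
    show "\<forall>\<^sub>F n in sequentially. 0 \<le> l2norm2 M (\<lambda>x. u (T x) - projN M \<psi> n u (T x))"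
      by (simp add: l2norm2_nonneg)
    show "\<forall>\<^sub>F n in sequentially. l2norm2 M (\<lambda>x. u (T x) - projN M \<psi> n u (T x))
        \<le> C * l2norm2 M (\<lambda>x. u x - projN M \<psi> n u x)"
      using C[OF L2_diff[OF u P]] by simp
    show "(\<lambda>n. C * l2norm2 M (\<lambda>x. u x - projN M \<psi> n u x)) \<longlonglongrightarrow> 0"
      using tendsto_mult_left[OF l2norm2_projN_tendsto_0[OF onb u], of C] by simp
  qed
qed

lemma koopman_adjoint_column:
  assumes onb: "orthonormal_basis M \<psi>" and K: "koopman_bounded M T"
  obtains k where "k \<in> L2 M" "\<And>u. u \<in> L2 M \<Longrightarrow> l2inner M (\<lambda>x. u (T x)) (\<psi> j) = l2inner M u k"
proof -
  have ons: "orthonormal_system M \<psi>"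
    using onb by (rule orthonormal_basis_imp_system)
  define \<beta> where "\<beta> m = l2inner M (\<lambda>x. \<psi> m (T x)) (\<psi> j)" for m
  obtain C where "0 \<le> C" "\<And>f. f \<in> L2 M \<Longrightarrow> l2norm2 M (\<lambda>x. f (T x)) \<le> C * l2norm2 M f"
    using koopman_bounded_l2norm2[OF K] by blast
  then have "summable (\<lambda>m. (cmod (cnj (\<beta> m)))\<^sup>2)"
    using koopman_matrix_row_bound[OF ons K] by (intro summableI_nonneg_bounded) (auto simp: \<beta>_def)
  then obtain k where k: "k \<in> L2 M" "\<And>m. l2inner M k (\<psi> m) = cnj (\<beta> m)"
    using riesz_fischer[OF ons, of "\<lambda>m. cnj (\<beta> m)"] by blast
  have "l2inner M (\<lambda>x. u (T x)) (\<psi> j) = l2inner M u k" if u: "u \<in> L2 M" for u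
  proof -
    define P where "P n = projN M \<psi> n u" for n
    have P: "P n \<in> L2 M" for n
      unfolding P_def using ons by (rule projN_L2)
    have "l2inner M (\<lambda>x. P n (T x)) (\<psi> j) = l2inner M (P n) k" for n
      unfolding P_def projN_def
      using l2inner_lincomb_left[where \<psi>="\<lambda>m x. \<psi> m (T x)",
          OF koopman_bounded_L2[OF K orthonormal_system_L2[OF ons]] orthonormal_system_L2[OF ons]]
        l2inner_lincomb_left[where \<psi>=\<psi>, OF orthonormal_system_L2[OF ons] k(1)]
      by (simp add: \<beta>_def k(2) l2inner_commute[of M "\<psi> m" k for m])
    moreover have "(\<lambda>n. l2inner M (\<lambda>x. P n (T x)) (\<psi> j)) \<longlonglongrightarrow> l2inner M (\<lambda>x. u (T x)) (\<psi> j)"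
      unfolding P_def
      by (intro tendsto_l2inner_left koopman_bounded_L2[OF K] u projN_L2[OF ons]
          orthonormal_system_L2[OF ons] l2norm2_koopman_projN_tendsto_0[OF onb K u])
    ultimately have "(\<lambda>n. l2inner M (P n) k) \<longlonglongrightarrow> l2inner M (\<lambda>x. u (T x)) (\<psi> j)"
      by simp
    moreover have "(\<lambda>n. l2inner M (P n) k) \<longlonglongrightarrow> l2inner M u k"
      unfolding P_def by (intro tendsto_l2inner_left projN_L2[OF ons] u k(1) l2norm2_projN_tendsto_0[OF onb u])
    ultimately show ?thesis
      by (rule LIMSEQ_unique)
  qed
  with k(1) show ?thesis
    by (rule that)
qed

section \<open>Limits of Galerkin eigenpairs\<close>

lemma eigenpair_KN_L2: "eigenpair_KN M T \<psi> N \<mu> u \<Longrightarrow> u \<in> L2 M"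
  unfolding eigenpair_KN_def in_FN_def by blast

lemma eigenpair_KN_AE:
  "eigenpair_KN M T \<psi> N \<mu> u \<Longrightarrow> AE x in M. projN M \<psi> N (\<lambda>x. u (T x)) x = \<mu> * u x"
  unfolding eigenpair_KN_def by (simp add: o_def)

lemma eigenpair_KN_coefficient:
  assumes ons: "orthonormal_system M \<psi>" and eig: "eigenpair_KN M T \<psi> N \<mu> u" and "j < N"
  shows "l2inner M (\<lambda>x. u (T x)) (\<psi> j) = \<mu> * l2inner M u (\<psi> j)"
proof -
  have u: "u \<in> L2 M"
    using eig by (rule eigenpair_KN_L2)
  have "l2inner M (\<lambda>x. u (T x)) (\<psi> j) = l2inner M (projN M \<psi> N (\<lambda>x. u (T x))) (\<psi> j)"
    using l2inner_lincomb_orthonormal[OF ons finite_lessThan, of "\<lambda>i. l2inner M (\<lambda>x. u (T x)) (\<psi> i)"]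
      \<open>j < N\<close>
    by (simp add: projN_def)
  also have "\<dots> = l2inner M (\<lambda>x. \<mu> * u x) (\<psi> j)"
    using eigenpair_KN_AE[OF eig] projN_L2[OF ons] L2_mult[OF u] orthonormal_system_L2[OF ons]
    by (intro l2inner_cong_AE) (auto intro: L2_measurable)
  finally show ?thesis
    by (simp add: l2inner_mult_left)
qed

lemma eigenpair_KN_eigenvalue_bound:
  assumes ons: "orthonormal_system M \<psi>" and K: "koopman_bounded M T"
    and C: "\<And>f. f \<in> L2 M \<Longrightarrow> l2norm2 M (\<lambda>x. f (T x)) \<le> C * l2norm2 M f"
    and eig: "eigenpair_KN M T \<psi> N \<mu> u" and unit: "l2norm2 M u = 1"
  shows "(cmod \<mu>)\<^sup>2 \<le> C"
proof -
  have u: "u \<in> L2 M"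
    using eig by (rule eigenpair_KN_L2)
  have Ku: "(\<lambda>x. u (T x)) \<in> L2 M"
    using K u by (rule koopman_bounded_L2)
  have "(cmod \<mu>)\<^sup>2 = l2norm2 M (\<lambda>x. \<mu> * u x)"
    by (simp add: l2norm2_mult unit)
  also have "\<dots> = l2norm2 M (projN M \<psi> N (\<lambda>x. u (T x)))"
    using eigenpair_KN_AE[OF eig] projN_L2[OF ons] L2_mult[OF u]
    by (intro l2norm2_cong_AE) (auto intro: L2_measurable)
  also have "\<dots> = (\<Sum>i<N. (cmod (l2inner M (\<lambda>x. u (T x)) (\<psi> i)))\<^sup>2)"
    unfolding projN_def using ons by (simp add: l2norm2_lincomb_orthonormal)
  also have "\<dots> \<le> l2norm2 M (\<lambda>x. u (T x))"
    using ons Ku by (rule bessel_inequality[OF _ finite_lessThan])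
  also have "\<dots> \<le> C"
    using C[OF u] unit by simp
  finally show ?thesis .
qed

lemma bounded_KN_eigenvalues:
  assumes ons: "orthonormal_system M \<psi>" and K: "koopman_bounded M T"
    and eig: "\<And>i. eigenpair_KN M T \<psi> (N i) (\<mu> i) (u i)" and unit: "\<And>i. l2norm M (u i) = 1"
  shows "bounded (range \<mu>)"
proof -
  obtain C where C: "\<And>f. f \<in> L2 M \<Longrightarrow> l2norm2 M (\<lambda>x. f (T x)) \<le> C * l2norm2 M f"
    using koopman_bounded_l2norm2[OF K] by blast
  have "cmod (\<mu> i) \<le> sqrt C" for i
    using eigenpair_KN_eigenvalue_bound[OF ons K C eig] unit
    by (simp add: l2norm_eq_sqrt_l2norm2 real_le_rsqrt)
  then show ?thesis
    unfolding bounded_iff by blast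
qed

lemma weak_limit_of_KN_eigenpairs:
  assumes onb: "orthonormal_basis M \<psi>" and K: "koopman_bounded M T"
    and r: "strict_mono r" and eig: "\<And>i. eigenpair_KN M T \<psi> (r i) (\<mu> i) (u i)"
    and \<mu>: "\<mu> \<longlonglongrightarrow> l" and weak: "weak_conv M u f" and f: "f \<in> L2 M"
  shows "AE x in M. f (T x) = l * f x"
proof -
  have ons: "orthonormal_system M \<psi>"
    using onb by (rule orthonormal_basis_imp_system)
  have Kf: "(\<lambda>x. f (T x)) \<in> L2 M"
    using K f by (rule koopman_bounded_L2)
  have "l2inner M (\<lambda>x. f (T x)) (\<psi> j) = l * l2inner M f (\<psi> j)" for j
  proof -
    obtain k where k: "k \<in> L2 M" "\<And>v. v \<in> L2 M \<Longrightarrow> l2inner M (\<lambda>x. v (T x)) (\<psi> j) = l2inner M v k"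
      using koopman_adjoint_column[OF onb K] by blast
    have "(\<lambda>i. \<mu> i * l2inner M (u i) (\<psi> j)) \<longlonglongrightarrow> l * l2inner M f (\<psi> j)"
      using weak orthonormal_system_L2[OF ons] unfolding weak_conv_def by (intro tendsto_mult \<mu>) auto
    moreover have "\<forall>\<^sub>F i in sequentially. \<mu> i * l2inner M (u i) (\<psi> j) = l2inner M (u i) k"
      using eventually_gt_at_top[of j]
    proof eventually_elim
      case (elim i)
      then have "j < r i"
        using seq_suble[OF r, of i] by simp
      then show ?case
        using eigenpair_KN_coefficient[OF ons eig[of i]] k(2)[OF eigenpair_KN_L2[OF eig[of i]]]
        by simp
    qed
    ultimately have "(\<lambda>i. l2inner M (u i) k) \<longlonglongrightarrow> l * l2inner M f (\<psi> j)"
      by (rule Lim_transform_eventually)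
    moreover have "(\<lambda>i. l2inner M (u i) k) \<longlonglongrightarrow> l2inner M f k"
      using weak k(1) unfolding weak_conv_def by blast
    ultimately show ?thesis
      using k(2)[OF f] LIMSEQ_unique by metis
  qed
  then have "AE x in M. f (T x) - l * f x = 0"
    using Kf f ons
    by (intro orthonormal_basis_complete[OF onb] L2_diff L2_mult)
      (simp_all add: l2inner_diff_left L2_mult orthonormal_system_L2 l2inner_mult_left)
  then show ?thesis
    by simp
qed

theorem theorem4:
  fixes M :: "'a::topological_space measure" and T :: "'a \<Rightarrow> 'a"
    and \<psi> :: "nat \<Rightarrow> 'a \<Rightarrow> complex"
    and lam :: "nat \<Rightarrow> complex" and \<phi> :: "nat \<Rightarrow> 'a \<Rightarrow> complex"
  assumes "sets M = sets borel"
    and "koopman_bounded M T"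
    and "orthonormal_basis M \<psi>"
    and "\<And>N. N \<ge> 1 \<Longrightarrow> eigenpair_KN M T \<psi> N (lam N) (\<phi> N)"
    and "\<And>N. N \<ge> 1 \<Longrightarrow> l2norm M (\<phi> N) = 1"
  shows "\<exists>r :: nat \<Rightarrow> nat. \<exists>l :: complex. \<exists>f :: 'a \<Rightarrow> complex.
           strict_mono r \<and> (\<forall>i. r i \<ge> 1) \<and>
           (lam \<circ> r) \<longlonglongrightarrow> l \<and>
           f \<in> L2 M \<and> weak_conv M (\<phi> \<circ> r) f \<and>
           (AE x in M. f (T x) = l * f x) \<and>
           (l2norm M f \<noteq> 0 \<longrightarrow> (AE x in M. f (T x) = l * f x) \<and> \<not> (AE x in M. f x = 0))"
proof -
  note K = assms(2) and onb = assms(3)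
  have eig: "eigenpair_KN M T \<psi> (Suc N) (lam (Suc N)) (\<phi> (Suc N))"
    and unit: "l2norm M (\<phi> (Suc N)) = 1" for N
    using assms(4,5) by simp_all
  have "bounded (range (\<lambda>N. lam (Suc N)))"
    using orthonormal_basis_imp_system[OF onb] K eig unit by (rule bounded_KN_eigenvalues)
  then obtain l s where s: "strict_mono s" and lam_s: "((\<lambda>N. lam (Suc N)) \<circ> s) \<longlonglongrightarrow> l"
    using bounded_imp_convergent_subsequence by blast
  have \<phi>_s: "\<phi> (Suc (s i)) \<in> L2 M" "l2norm M (\<phi> (Suc (s i))) \<le> 1" for i
    using eigenpair_KN_L2[OF eig] unit by simp_all
  obtain t f where t: "strict_mono t" and f: "f \<in> L2 M"
    and weak: "weak_conv M ((\<lambda>i. \<phi> (Suc (s i))) \<circ> t) f"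
    using L2_bounded_weakly_convergent_subseq[OF onb, of "\<lambda>i. \<phi> (Suc (s i))" 1] \<phi>_s by blast
  define r where "r i = Suc (s (t i))" for i
  have r: "strict_mono r"
    using s t by (simp add: r_def strict_mono_def)
  have lam_r: "(lam \<circ> r) \<longlonglongrightarrow> l"
    using LIMSEQ_subseq_LIMSEQ[OF lam_s t] by (simp add: r_def o_def)
  have weak_r: "weak_conv M (\<phi> \<circ> r) f"
    using weak by (simp add: r_def o_def)
  have "AE x in M. f (T x) = l * f x"
    using eig by (intro weak_limit_of_KN_eigenpairs[OF onb K r _ lam_r weak_r f]) (simp add: r_def)
  moreover have "\<not> (AE x in M. f x = 0)" if "l2norm M f \<noteq> 0"
    using that l2norm2_eq_0_iff[OF f] by (simp add: l2norm_eq_sqrt_l2norm2)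
  ultimately show ?thesis
    using r lam_r f weak_r by (auto simp: r_def intro!: exI[of _ r])
qed

end
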